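(* Let $F=(f_t)_{t\in\mathbb{R}}$ be a continuous flow on a compact metric space $X$, and suppose the $F$-invariant Borel probability measure $\mu$ is almost expansive at scale $\varepsilon$. Let $\gamma\in(0,\varepsilon/2]$, and for each $t>0$ let $\mathcal{A}_t$ be an adapted partition for a $(t,\gamma)$-separated set of maximal cardinality. Let $Q\subset X$ be a measurable $F$-invariant set. Then for every $\alpha>0$ there exists $t_0$ such that for every $t\ge t_0$ there is a subcollection $U\subset\mathcal{A}_t$ with $\mu(U\triangle Q)<\alpha$ (where $U$ also denotes the union of its elements).
   Context: $d_t(x,y)=\sup_{s\in[0,t]}d(f_sx,f_sy)$, $B_t(x,r)=\{y:d_t(x,y)<r\}$, $\overline B_t(x,r)=\{y:d_t(x,y)\le r\}$; $E$ is $(t,\gamma)$-separated if $d_t(x,y)>\gamma$ for distinct $x,y\in E$. If $E_t$ is a $(t,\gamma)$-separated set of maximal cardinality, a partition $\mathcal{A}_t$ of $X$ is adapted to $E_t$ if for every $w\in\mathcal{A}_t$ there is $x\in E_t$ with $B_t(x,\gamma/2)\subset w\subset\overline B_t(x,\gamma)$. $\Gamma_\varepsilon(x)=\{y:d(f_sx,f_sy)\le\varepsilon\ \forall s\in\mathbb{R}\}$, $\mathrm{NE}(\varepsilon)=\{x:\Gamma_\varepsilon(x)\not\subset\{f_sx:s\in\mathbb{R}\}\}$; $\mu$ is almost expansive at scale $\varepsilon$ if $\mu(\mathrm{NE}(\varepsilon))=0$. *)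

theory Defs
  imports "HOL-Probability.Probability"
begin

definition is_continuous_flow :: "(real \<Rightarrow> 'a::topological_space \<Rightarrow> 'a) \<Rightarrow> bool" where
  "is_continuous_flow f \<longleftrightarrow>
     continuous_on UNIV (\<lambda>p. f (fst p) (snd p)) \<and>
     (\<forall>x. f 0 x = x) \<and>
     (\<forall>s t x. f (s + t) x = f s (f t x))"

definition bowen_dist :: "(real \<Rightarrow> 'a::metric_space \<Rightarrow> 'a) \<Rightarrow> real \<Rightarrow> 'a \<Rightarrow> 'a \<Rightarrow> real" where
  "bowen_dist f t x y = (SUP s\<in>{0..t}. dist (f s x) (f s y))"

definition bowen_ball :: "(real \<Rightarrow> 'a::metric_space \<Rightarrow> 'a) \<Rightarrow> real \<Rightarrow> 'a \<Rightarrow> real \<Rightarrow> 'a set" where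
  "bowen_ball f t x r = {y. bowen_dist f t x y < r}"

definition bowen_cball :: "(real \<Rightarrow> 'a::metric_space \<Rightarrow> 'a) \<Rightarrow> real \<Rightarrow> 'a \<Rightarrow> real \<Rightarrow> 'a set" where
  "bowen_cball f t x r = {y. bowen_dist f t x y \<le> r}"

definition separated :: "(real \<Rightarrow> 'a::metric_space \<Rightarrow> 'a) \<Rightarrow> real \<Rightarrow> real \<Rightarrow> 'a set \<Rightarrow> bool" where
  "separated f t \<gamma> E \<longleftrightarrow> (\<forall>x\<in>E. \<forall>y\<in>E. x \<noteq> y \<longrightarrow> bowen_dist f t x y > \<gamma>)"

text \<open>A (t,gamma)-separated set of maximal cardinality (separated sets are finite in a compact space).\<close>
definition max_separated :: "(real \<Rightarrow> 'a::metric_space \<Rightarrow> 'a) \<Rightarrow> real \<Rightarrow> real \<Rightarrow> 'a set \<Rightarrow> bool" where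
  "max_separated f t \<gamma> E \<longleftrightarrow> finite E \<and> separated f t \<gamma> E \<and>
     (\<forall>E'. separated f t \<gamma> E' \<longrightarrow> finite E' \<and> card E' \<le> card E)"

definition borel_partition :: "'a::topological_space set set \<Rightarrow> bool" where
  "borel_partition P \<longleftrightarrow> \<Union>P = UNIV \<and> {} \<notin> P \<and>
     (\<forall>w\<in>P. \<forall>w'\<in>P. w \<noteq> w' \<longrightarrow> w \<inter> w' = {}) \<and> (\<forall>w\<in>P. w \<in> sets borel)"

definition adapted_partition ::
  "(real \<Rightarrow> 'a::metric_space \<Rightarrow> 'a) \<Rightarrow> real \<Rightarrow> real \<Rightarrow> 'a set \<Rightarrow> 'a set set \<Rightarrow> bool" where
  "adapted_partition f t \<gamma> E P \<longleftrightarrow> borel_partition P \<and>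
     (\<forall>w\<in>P. \<exists>x\<in>E. bowen_ball f t x (\<gamma>/2) \<subseteq> w \<and> w \<subseteq> bowen_cball f t x \<gamma>)"

definition Gamma_set :: "(real \<Rightarrow> 'a::metric_space \<Rightarrow> 'a) \<Rightarrow> real \<Rightarrow> 'a \<Rightarrow> 'a set" where
  "Gamma_set f \<epsilon> x = {y. \<forall>s. dist (f s x) (f s y) \<le> \<epsilon>}"

definition NE :: "(real \<Rightarrow> 'a::metric_space \<Rightarrow> 'a) \<Rightarrow> real \<Rightarrow> 'a set" where
  "NE f \<epsilon> = {x. \<not> Gamma_set f \<epsilon> x \<subseteq> range (\<lambda>s. f s x)}"

text \<open>mu(NE(eps)) = 0, read as: NE(eps) is contained in a mu-null set.\<close>
definition almost_expansive :: "(real \<Rightarrow> 'a::metric_space \<Rightarrow> 'a) \<Rightarrow> 'a measure \<Rightarrow> real \<Rightarrow> bool" where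
  "almost_expansive f \<mu> \<epsilon> \<longleftrightarrow> (\<exists>N\<in>null_sets \<mu>. NE f \<epsilon> \<subseteq> N)"

definition flow_invariant_measure :: "(real \<Rightarrow> 'a::topological_space \<Rightarrow> 'a) \<Rightarrow> 'a measure \<Rightarrow> bool" where
  "flow_invariant_measure f \<mu> \<longleftrightarrow>
     (\<forall>t. \<forall>A\<in>sets \<mu>. emeasure \<mu> (f t -` A) = emeasure \<mu> A)"

end

theory Submission
  imports Defs
begin

text \<open>
  Sandwich \<open>Q\<close> between a closed set \<open>K\<close> and an open set \<open>G\<close> with \<open>\<mu>(G - K)\<close> small, and
  let \<open>U\<close> consist of the partition elements containing a point that lands in \<open>K\<close> at the midpoint
  time \<open>t/2\<close>. A point of \<open>U \<triangle> Q\<close> is mapped at time \<open>t/2\<close> either into \<open>G - K\<close>, or to a point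
  outside \<open>G\<close> whose orbit is \<open>2\<gamma>\<close>-shadowed on \<open>[-t/2, t/2]\<close> by an orbit through \<open>K\<close>. The
  points of the second kind form closed sets shrinking, as \<open>t \<rightarrow> \<infinity>\<close>, into \<open>NE(\<epsilon>)\<close>: by
  compactness a limit shadowing point exists for all times, and it cannot lie on the orbit because
  \<open>Q\<close> is invariant. Almost expansivity and invariance of \<open>\<mu>\<close> then make both parts small.
\<close>

definition closed_open_regular :: "'a::topological_space measure \<Rightarrow> 'a set \<Rightarrow> bool" where
  "closed_open_regular M B \<longleftrightarrow>
     (\<forall>\<delta>>0. \<exists>F G. closed F \<and> open G \<and> F \<subseteq> B \<and> B \<subseteq> G \<and> measure M (G - F) < \<delta>)"

lemma closed_open_regular_Compl:
  assumes "closed_open_regular M B"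
  shows "closed_open_regular M (- B)"
  unfolding closed_open_regular_def
proof (intro allI impI)
  fix \<delta> :: real assume "\<delta> > 0"
  then obtain F G where "closed F" "open G" "F \<subseteq> B" "B \<subseteq> G" "measure M (G - F) < \<delta>"
    using assms unfolding closed_open_regular_def by meson
  moreover have "- F - - G = G - F" by blast
  ultimately show "\<exists>F' G'. closed F' \<and> open G' \<and> F' \<subseteq> - B \<and> - B \<subseteq> G' \<and> measure M (G' - F') < \<delta>"
    by (intro exI[of _ "- G"] exI[of _ "- F"]) auto
qed

lemma closed_open_regular_open:
  fixes M :: "'a::metric_space measure"
  assumes "finite_measure M" and "sets M = sets borel" and "open U"
  shows "closed_open_regular M U"
  unfolding closed_open_regular_def
proof (intro allI impI)
  interpret finite_measure M by fact
  fix \<delta> :: real assume "\<delta> > 0"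
  define F where "F n = (\<Inter>y\<in>-U. - ball y (1 / Suc n))" for n :: nat
  have closed_F: "closed (F n)" for n
    unfolding F_def by (intro closed_INT) auto
  have F_sub: "F n \<subseteq> U" for n
  proof
    fix x assume "x \<in> F n"
    then have "x \<notin> ball y (1 / Suc n)" if "y \<notin> U" for y
      using that unfolding F_def by blast
    then show "x \<in> U" by (metis centre_in_ball of_nat_0_less_iff zero_less_Suc zero_less_divide_1_iff)
  qed
  have incseq: "incseq F"
  proof (rule incseq_SucI)
    fix n
    have "ball y (1 / Suc (Suc n)) \<subseteq> ball y (1 / Suc n)" for y :: 'a
      by (rule subset_ball) (simp add: frac_le)
    then show "F n \<subseteq> F (Suc n)" unfolding F_def by blast
  qed
  have Union_F: "(\<Union>n. F n) = U"
  proof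
    show "U \<subseteq> (\<Union>n. F n)"
    proof
      fix x assume "x \<in> U"
      then obtain e where "e > 0" "ball x e \<subseteq> U"
        using \<open>open U\<close> open_contains_ball by blast
      moreover obtain n where "1 / Suc n < e"
        using \<open>e > 0\<close> nat_approx_posE by blast
      have "x \<notin> ball y (1 / Suc n)" if "y \<notin> U" for y
      proof
        assume "x \<in> ball y (1 / Suc n)"
        then have "y \<in> ball x e"
          using \<open>1 / Suc n < e\<close> by (simp add: dist_commute)
        then show False
          using that \<open>ball x e \<subseteq> U\<close> by blast
      qed
      then have "x \<in> F n"
        unfolding F_def by blast
      then show "x \<in> (\<Union>n. F n)" by blast
    qed
  qed (use F_sub in blast)
  have "range F \<subseteq> sets M"
    using closed_F assms(2) by auto
  then have "(\<lambda>n. measure M (F n)) \<longlonglongrightarrow> measure M (\<Union>n. F n)"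
    using incseq by (rule finite_Lim_measure_incseq)
  then have "(\<lambda>n. measure M (F n)) \<longlonglongrightarrow> measure M U"
    unfolding Union_F .
  then have "\<forall>\<^sub>F n in sequentially. measure M U - \<delta> < measure M (F n)"
    using \<open>\<delta> > 0\<close> by (simp add: order_tendstoD(1))
  then obtain n where "measure M U - \<delta> < measure M (F n)"
    by (auto simp: eventually_sequentially)
  moreover have "measure M (U - F n) = measure M U - measure M (F n)"
    using F_sub closed_F assms by (intro finite_measure_Diff) auto
  ultimately show "\<exists>F G. closed F \<and> open G \<and> F \<subseteq> U \<and> U \<subseteq> G \<and> measure M (G - F) < \<delta>"
    using closed_F F_sub \<open>open U\<close> by (intro exI[of _ "F n"] exI[of _ U]) auto
qed

lemma closed_open_regular_countable_Union:
  fixes M :: "'a::topological_space measure"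
  assumes "finite_measure M" and "sets M = sets borel"
    and regular: "\<And>i::nat. closed_open_regular M (B i)"
  shows "closed_open_regular M (\<Union>i. B i)"
  unfolding closed_open_regular_def
proof (intro allI impI)
  interpret finite_measure M by fact
  fix \<delta> :: real assume "\<delta> > 0"
  define e :: "nat \<Rightarrow> real" where "e = (\<lambda>i. \<delta> / 4 * (1 / 2) ^ i)"
  have e_pos: "e i > 0" for i
    using \<open>\<delta> > 0\<close> by (simp add: e_def)
  have e_sums: "e sums (\<delta> / 2)"
    unfolding e_def using sums_mult[OF geometric_sums[of "1 / 2 :: real"], of "\<delta> / 4"] by simp
  have "\<forall>i. \<exists>F G. closed F \<and> open G \<and> F \<subseteq> B i \<and> B i \<subseteq> G \<and> measure M (G - F) < e i"
    using regular e_pos unfolding closed_open_regular_def by meson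
  then obtain F G where closed_F: "\<And>i. closed (F i)" and open_G: "\<And>i. open (G i)"
    and FBG: "\<And>i. F i \<subseteq> B i" "\<And>i. B i \<subseteq> G i"
    and gap: "\<And>i. measure M (G i - F i) < e i"
    by metis
  have sets_F: "range F \<subseteq> sets M" and sets_gap: "range (\<lambda>i. G i - F i) \<subseteq> sets M"
    using closed_F open_G assms(2) by auto
  have "summable e"
    using e_sums by (rule sums_summable)
  then have summable_gap: "summable (\<lambda>i. measure M (G i - F i))"
    by (rule summable_comparison_test') (simp add: gap less_imp_le)
  have "measure M (\<Union>i. G i - F i) \<le> (\<Sum>i. measure M (G i - F i))"
    using sets_gap summable_gap by (rule finite_measure_subadditive_countably)
  also have "\<dots> \<le> (\<Sum>i. e i)"
    using gap summable_gap \<open>summable e\<close> by (intro suminf_le) (auto intro: less_imp_le)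
  finally have small_gaps: "measure M (\<Union>i. G i - F i) \<le> \<delta> / 2"
    using e_sums sums_unique by metis
  have "(\<lambda>n. measure M (\<Union>i<n. F i)) \<longlonglongrightarrow> measure M (\<Union>n. \<Union>i<n. F i)"
    using sets_F by (intro finite_Lim_measure_incseq monoI UN_mono) auto
  moreover have "(\<Union>n. \<Union>i<n. F i) = (\<Union>i. F i)"
    by blast
  ultimately have "\<forall>\<^sub>F n in sequentially. measure M (\<Union>i. F i) - \<delta> / 2 < measure M (\<Union>i<n. F i)"
    using \<open>\<delta> > 0\<close> by (simp add: order_tendstoD(1))
  then obtain N where "measure M (\<Union>i. F i) - \<delta> / 2 < measure M (\<Union>i<N. F i)"
    by (auto simp: eventually_sequentially)
  moreover have "measure M ((\<Union>i. F i) - (\<Union>i<N. F i)) = measure M (\<Union>i. F i) - measure M (\<Union>i<N. F i)"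
    using sets_F by (intro finite_measure_Diff) auto
  ultimately have small_tail: "measure M ((\<Union>i. F i) - (\<Union>i<N. F i)) < \<delta> / 2"
    by linarith
  have "(\<Union>i. G i) - (\<Union>i<N. F i) \<subseteq> (\<Union>i. G i - F i) \<union> ((\<Union>i. F i) - (\<Union>i<N. F i))"
    by blast
  then have "measure M ((\<Union>i. G i) - (\<Union>i<N. F i))
      \<le> measure M (\<Union>i. G i - F i) + measure M ((\<Union>i. F i) - (\<Union>i<N. F i))"
    using sets_F sets_gap by (intro order_trans[OF finite_measure_mono measure_Un_le]) auto
  then have "measure M ((\<Union>i. G i) - (\<Union>i<N. F i)) < \<delta>"
    using small_gaps small_tail by linarith
  moreover have "(\<Union>i<N. F i) \<subseteq> (\<Union>i. B i)" "(\<Union>i. B i) \<subseteq> (\<Union>i. G i)"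
    using FBG by blast+
  ultimately show "\<exists>F' G'. closed F' \<and> open G' \<and> F' \<subseteq> (\<Union>i. B i) \<and> (\<Union>i. B i) \<subseteq> G'
      \<and> measure M (G' - F') < \<delta>"
    using closed_F open_G by (intro exI[of _ "\<Union>i<N. F i"] exI[of _ "\<Union>i. G i"]) auto
qed

lemma closed_open_regular_borel:
  fixes M :: "'a::metric_space measure"
  assumes "finite_measure M" and "sets M = sets borel" and "B \<in> sets borel"
  shows "closed_open_regular M B"
proof -
  have "B \<in> sigma_sets UNIV {S. open S}"
    using assms(3) by (simp add: sets_borel)
  then show ?thesis
  proof induction
    case (Basic U)
    then show ?case
      using closed_open_regular_open[OF assms(1,2)] by simp
  next
    case Empty
    show ?case
      using closed_open_regular_open[OF assms(1,2) open_empty] .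
  next
    case (Compl B)
    then show ?case
      using closed_open_regular_Compl by (simp add: Compl_eq_Diff_UNIV)
  next
    case (Union B)
    then show ?case
      using closed_open_regular_countable_Union[OF assms(1,2)] by simp
  qed
qed

lemma continuous_flow_continuous_on:
  assumes "is_continuous_flow f"
  shows "continuous_on UNIV (f t)"
proof -
  have "continuous_on UNIV (\<lambda>p. f (fst p) (snd p))"
    using assms unfolding is_continuous_flow_def by blast
  then have "continuous_on UNIV ((\<lambda>p. f (fst p) (snd p)) \<circ> Pair t)"
    by (intro continuous_on_compose continuous_intros) (auto elim: continuous_on_subset)
  then show ?thesis
    by (simp add: o_def)
qed

lemma continuous_flow_add:
  assumes "is_continuous_flow f"
  shows "f (s + t) x = f s (f t x)"
  using assms unfolding is_continuous_flow_def by blast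

lemma dist_le_bowen_dist:
  fixes f :: "real \<Rightarrow> 'a::metric_space \<Rightarrow> 'a"
  assumes "bounded (UNIV :: 'a set)" and "s \<in> {0..t}"
  shows "dist (f s x) (f s y) \<le> bowen_dist f t x y"
  unfolding bowen_dist_def
  using assms by (intro cSUP_upper bounded_imp_bdd_above bounded_dist_comp) (auto intro: bounded_subset)

definition tracked_points ::
  "(real \<Rightarrow> 'a::metric_space \<Rightarrow> 'a) \<Rightarrow> real \<Rightarrow> real \<Rightarrow> 'a set \<Rightarrow> 'a set \<Rightarrow> 'a set" where
  "tracked_points f \<epsilon> T L K = {z \<in> L. \<exists>k\<in>K. \<forall>s\<in>{-T..T}. dist (f s z) (f s k) \<le> \<epsilon>}"

lemma tracked_points_antimono:
  assumes "T \<le> T'"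
  shows "tracked_points f \<epsilon> T' L K \<subseteq> tracked_points f \<epsilon> T L K"
  using assms unfolding tracked_points_def by fastforce

lemma closed_tracked_points:
  assumes "\<And>s. continuous_on UNIV (f s)" and "compact L" and "compact K"
  shows "closed (tracked_points f \<epsilon> T L K)"
proof -
  define S where "S = (L \<times> K) \<inter> (\<Inter>s\<in>{-T..T}. {p. dist (f s (fst p)) (f s (snd p)) \<le> \<epsilon>})"
  have "closed {p. dist (f s (fst p)) (f s (snd p)) \<le> \<epsilon>}" for s
    by (intro closed_Collect_le continuous_intros continuous_on_compose2[OF assms(1)]) auto
  then have "compact S"
    unfolding S_def using assms(2,3) by (intro compact_Int_closed compact_Times closed_INT) auto
  moreover have "tracked_points f \<epsilon> T L K = fst ` S"
  proof (intro equalityI subsetI)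
    fix z assume "z \<in> tracked_points f \<epsilon> T L K"
    then obtain k where "z \<in> L" "k \<in> K" "\<forall>s\<in>{-T..T}. dist (f s z) (f s k) \<le> \<epsilon>"
      unfolding tracked_points_def by blast
    then have "(z, k) \<in> S"
      unfolding S_def by simp
    then show "z \<in> fst ` S"
      by force
  qed (auto simp: tracked_points_def S_def)
  moreover have "compact (fst ` S)"
    using \<open>compact S\<close> by (intro compact_continuous_image continuous_on_fst continuous_on_id)
  ultimately show ?thesis
    by (simp add: compact_imp_closed)
qed

lemma compact_Int_decseq_closed_nonempty:
  assumes "compact K" and "\<And>n. closed (W n)" and "decseq W" and "\<And>n. K \<inter> W n \<noteq> {}"
  shows "K \<inter> (\<Inter>n. W n) \<noteq> {}"
proof (rule compact_imp_fip_image[OF assms(1)])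
  fix I :: "nat set" assume "finite I"
  then have "W (Max (insert 0 I)) \<subseteq> (\<Inter>i\<in>I. W i)"
    using \<open>decseq W\<close> by (intro INT_greatest) (simp add: decseq_def)
  then show "K \<inter> (\<Inter>i\<in>I. W i) \<noteq> {}"
    using assms(4) by blast
qed (use assms(2) in blast)

text \<open>The tracking point obtained by compactness lies in \<open>K \<subseteq> Q\<close>, hence off the orbit of a point
  of \<open>L\<close>, which avoids the invariant set \<open>Q\<close>.\<close>
lemma Inter_tracked_points_subset_NE:
  assumes "\<And>s. continuous_on UNIV (f s)" and "compact K"
    and "K \<subseteq> Q" and "L \<inter> Q = {}" and invariant: "\<And>s. f s -` Q = Q"
  shows "(\<Inter>n. tracked_points f \<epsilon> (real n) L K) \<subseteq> NE f \<epsilon>"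
proof
  fix z assume z: "z \<in> (\<Inter>n. tracked_points f \<epsilon> (real n) L K)"
  define W where "W n = (\<Inter>s\<in>{- real n..real n}. {k. dist (f s z) (f s k) \<le> \<epsilon>})" for n :: nat
  have "K \<inter> (\<Inter>n. W n) \<noteq> {}"
  proof (rule compact_Int_decseq_closed_nonempty[OF \<open>compact K\<close>])
    show "closed (W n)" for n
      unfolding W_def
      by (intro closed_INT ballI closed_Collect_le continuous_intros continuous_on_compose2[OF assms(1)]) auto
    show "decseq W"
      unfolding W_def decseq_def by (intro allI impI INF_superset_mono) auto
    show "K \<inter> W n \<noteq> {}" for n
    proof -
      obtain k where "k \<in> K" "\<forall>s\<in>{- real n..real n}. dist (f s z) (f s k) \<le> \<epsilon>"
        using z unfolding tracked_points_def by blast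
      then have "k \<in> K \<inter> W n"
        unfolding W_def by blast
      then show ?thesis
        by blast
    qed
  qed
  then obtain k where "k \<in> K" and k: "\<And>n. k \<in> W n"
    by blast
  have "k \<in> Gamma_set f \<epsilon> z"
    unfolding Gamma_set_def
  proof (intro CollectI allI)
    fix s :: real
    have "s \<in> {- real (nat \<lceil>\<bar>s\<bar>\<rceil>)..real (nat \<lceil>\<bar>s\<bar>\<rceil>)}"
      by auto linarith+
    then show "dist (f s z) (f s k) \<le> \<epsilon>"
      using k unfolding W_def by blast
  qed
  moreover have "k \<notin> range (\<lambda>s. f s z)"
  proof
    assume "k \<in> range (\<lambda>s. f s z)"
    then obtain s where "f s z \<in> Q"
      using \<open>k \<in> K\<close> \<open>K \<subseteq> Q\<close> by blast
    then have "z \<in> Q"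
      using invariant[of s] by blast
    then show False
      using z \<open>L \<inter> Q = {}\<close> unfolding tracked_points_def by blast
  qed
  ultimately show "z \<in> NE f \<epsilon>"
    unfolding NE_def by blast
qed

lemma tracked_points_measure_small:
  fixes \<mu> :: "'a::metric_space measure"
  assumes "finite_measure \<mu>" and "sets \<mu> = sets borel" and "almost_expansive f \<mu> \<epsilon>"
    and "\<And>s. continuous_on UNIV (f s)" and "compact L" and "compact K"
    and "K \<subseteq> Q" and "L \<inter> Q = {}" and "\<And>s. f s -` Q = Q" and "\<delta> > 0"
  shows "\<exists>T. \<forall>T'\<ge>T. measure \<mu> (tracked_points f \<epsilon> T' L K) < \<delta>"
proof -
  interpret finite_measure \<mu> by fact
  define B where "B n = tracked_points f \<epsilon> (real n) L K" for n :: nat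
  have sets_B: "range B \<subseteq> sets \<mu>"
    unfolding B_def using closed_tracked_points[OF assms(4-6)] assms(2) by auto
  have "decseq B"
    unfolding B_def decseq_def by (simp add: tracked_points_antimono)
  with sets_B have lim: "(\<lambda>n. measure \<mu> (B n)) \<longlonglongrightarrow> measure \<mu> (\<Inter>n. B n)"
    by (intro finite_Lim_measure_decseq)
  obtain N where "N \<in> null_sets \<mu>" and "NE f \<epsilon> \<subseteq> N"
    using assms(3) unfolding almost_expansive_def by blast
  moreover have "(\<Inter>n. B n) \<in> sets \<mu>"
    using sets_B by auto
  moreover have "(\<Inter>n. B n) \<subseteq> NE f \<epsilon>"
    unfolding B_def by (rule Inter_tracked_points_subset_NE[OF assms(4,6-9)])
  ultimately have "(\<Inter>n. B n) \<in> null_sets \<mu>"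
    by (blast intro: null_sets_subset)
  then have "measure \<mu> (\<Inter>n. B n) = 0"
    by (simp add: measure_def null_setsD1)
  then have "\<forall>\<^sub>F n in sequentially. measure \<mu> (B n) < \<delta>"
    using order_tendstoD(2)[OF lim] \<open>\<delta> > 0\<close> by simp
  then obtain n where "measure \<mu> (B n) < \<delta>"
    by (auto simp: eventually_sequentially)
  have "measure \<mu> (tracked_points f \<epsilon> T' L K) < \<delta>" if "real n \<le> T'" for T'
  proof -
    have "tracked_points f \<epsilon> T' L K \<subseteq> B n"
      unfolding B_def using that by (rule tracked_points_antimono)
    then have "measure \<mu> (tracked_points f \<epsilon> T' L K) \<le> measure \<mu> (B n)"
      using sets_B by (intro finite_measure_mono) auto
    then show ?thesis
      using \<open>measure \<mu> (B n) < \<delta>\<close> by linarith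
  qed
  then show ?thesis
    by blast
qed

lemma adapted_partition_symdiff_subset:
  fixes f :: "real \<Rightarrow> 'a::metric_space \<Rightarrow> 'a"
  assumes "bounded (UNIV :: 'a set)" and "is_continuous_flow f"
    and "adapted_partition f t \<gamma> E P" and "2 * \<gamma> \<le> \<epsilon>"
    and "K \<subseteq> Q" and "Q \<subseteq> G" and invariant: "\<And>s. f s -` Q = Q"
  defines "U \<equiv> {w \<in> P. \<exists>k\<in>w. f (t / 2) k \<in> K}"
  shows "(\<Union>U - Q) \<union> (Q - \<Union>U) \<subseteq> f (t / 2) -` ((G - K) \<union> tracked_points f \<epsilon> (t / 2) (- G) K)"
proof
  let ?h = "t / 2"
  fix x assume x: "x \<in> (\<Union>U - Q) \<union> (Q - \<Union>U)"
  show "x \<in> f ?h -` ((G - K) \<union> tracked_points f \<epsilon> ?h (- G) K)"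
  proof (cases "x \<in> Q")
    case True
    have "\<Union>P = UNIV"
      using assms(3) unfolding adapted_partition_def borel_partition_def by blast
    then have "f ?h x \<notin> K"
      using x True unfolding U_def by blast
    moreover have "f ?h x \<in> Q"
      using True invariant[of ?h] by blast
    ultimately show ?thesis
      using \<open>Q \<subseteq> G\<close> by blast
  next
    case False
    then obtain w k where "w \<in> P" "x \<in> w" "k \<in> w" "f ?h k \<in> K"
      using x unfolding U_def by blast
    have "f ?h x \<notin> Q"
      using False invariant[of ?h] by blast
    moreover obtain c where "w \<subseteq> bowen_cball f t c \<gamma>"
      using \<open>w \<in> P\<close> assms(3) unfolding adapted_partition_def by blast
    then have "bowen_dist f t c x \<le> \<gamma>" "bowen_dist f t c k \<le> \<gamma>"
      using \<open>x \<in> w\<close> \<open>k \<in> w\<close> unfolding bowen_cball_def by auto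
    have "dist (f s (f ?h x)) (f s (f ?h k)) \<le> \<epsilon>" if "s \<in> {-?h..?h}" for s
    proof -
      have "s + ?h \<in> {0..t}"
        using that by auto
      then have "dist (f (s + ?h) c) (f (s + ?h) x) \<le> \<gamma>" "dist (f (s + ?h) c) (f (s + ?h) k) \<le> \<gamma>"
        using dist_le_bowen_dist[OF assms(1)] \<open>bowen_dist f t c x \<le> \<gamma>\<close> \<open>bowen_dist f t c k \<le> \<gamma>\<close>
        by (meson order_trans)+
      then have "dist (f (s + ?h) x) (f (s + ?h) k) \<le> \<epsilon>"
        using dist_triangle2[of "f (s + ?h) x" "f (s + ?h) k" "f (s + ?h) c"] \<open>2 * \<gamma> \<le> \<epsilon>\<close>
        by (simp add: dist_commute)
      then show ?thesis
        by (simp add: continuous_flow_add[OF assms(2)])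
    qed
    then have "f ?h x \<in> G \<or> f ?h x \<in> tracked_points f \<epsilon> ?h (- G) K"
      using \<open>f ?h k \<in> K\<close> unfolding tracked_points_def by blast
    ultimately show ?thesis
      using \<open>K \<subseteq> Q\<close> by blast
  qed
qed

lemma adapted_partition_symdiff_measure_le:
  fixes f :: "real \<Rightarrow> 'a::metric_space \<Rightarrow> 'a" and \<mu> :: "'a measure"
  assumes "compact (UNIV :: 'a set)" and "is_continuous_flow f"
    and "finite_measure \<mu>" and "sets \<mu> = sets borel" and "flow_invariant_measure f \<mu>"
    and "adapted_partition f t \<gamma> E P" and "2 * \<gamma> \<le> \<epsilon>"
    and "closed K" and "open G" and "K \<subseteq> Q" and "Q \<subseteq> G" and "\<And>s. f s -` Q = Q"
  shows "\<exists>U\<subseteq>P. measure \<mu> ((\<Union>U - Q) \<union> (Q - \<Union>U))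
           \<le> measure \<mu> (G - K) + measure \<mu> (tracked_points f \<epsilon> (t / 2) (- G) K)"
proof -
  interpret finite_measure \<mu> by fact
  define X where "X = (G - K) \<union> tracked_points f \<epsilon> (t / 2) (- G) K"
  define U where "U = {w \<in> P. \<exists>k\<in>w. f (t / 2) k \<in> K}"
  have continuous: "continuous_on UNIV (f s)" for s
    using assms(2) by (rule continuous_flow_continuous_on)
  have "compact (- G)" "compact K"
    using assms(8,9) compact_Int_closed[OF assms(1)] by auto
  then have closed_tracked: "closed (tracked_points f \<epsilon> (t / 2) (- G) K)"
    by (intro closed_tracked_points continuous)
  then have "X \<in> sets \<mu>"
    unfolding X_def using assms(4,8,9) by auto
  then have "f (t / 2) -` X \<in> sets \<mu>"
    using assms(4) by (simp add: measurable_sets_borel[OF borel_measurable_continuous_onI[OF continuous]])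
  moreover have "(\<Union>U - Q) \<union> (Q - \<Union>U) \<subseteq> f (t / 2) -` X"
    unfolding U_def X_def
    by (rule adapted_partition_symdiff_subset[OF compact_imp_bounded[OF assms(1)] assms(2,6,7,10-12)])
  ultimately have "measure \<mu> ((\<Union>U - Q) \<union> (Q - \<Union>U)) \<le> measure \<mu> (f (t / 2) -` X)"
    by (intro finite_measure_mono)
  also have "\<dots> = measure \<mu> X"
    using assms(5) \<open>X \<in> sets \<mu>\<close> unfolding flow_invariant_measure_def measure_def by simp
  also have "\<dots> \<le> measure \<mu> (G - K) + measure \<mu> (tracked_points f \<epsilon> (t / 2) (- G) K)"
    unfolding X_def using closed_tracked assms(4,8,9) by (intro measure_Un_le) auto
  finally have "measure \<mu> ((\<Union>U - Q) \<union> (Q - \<Union>U))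
      \<le> measure \<mu> (G - K) + measure \<mu> (tracked_points f \<epsilon> (t / 2) (- G) K)" .
  moreover have "U \<subseteq> P"
    unfolding U_def by blast
  ultimately show ?thesis
    by (intro exI[of _ U] conjI)
qed

theorem proposition3p9:
  fixes f :: "real \<Rightarrow> 'a::metric_space \<Rightarrow> 'a"
    and \<mu> :: "'a measure"
    and \<epsilon> \<gamma> :: real
    and E :: "real \<Rightarrow> 'a set"
    and A :: "real \<Rightarrow> 'a set set"
    and Q :: "'a set"
  assumes "compact (UNIV :: 'a set)"
    and "is_continuous_flow f"
    and "prob_space \<mu>" and "sets \<mu> = sets borel"
    and "flow_invariant_measure f \<mu>"
    and "almost_expansive f \<mu> \<epsilon>"
    and "0 < \<gamma>" and "\<gamma> \<le> \<epsilon> / 2"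
    and "\<And>t. t > 0 \<Longrightarrow> max_separated f t \<gamma> (E t) \<and> adapted_partition f t \<gamma> (E t) (A t)"
    and "Q \<in> sets borel" and "\<And>t. f t -` Q = Q"
  shows "\<forall>\<alpha>>0. \<exists>t0. \<forall>t\<ge>t0. \<exists>U\<subseteq>A t. measure \<mu> ((\<Union>U - Q) \<union> (Q - \<Union>U)) < \<alpha>"
proof (intro allI impI)
  fix \<alpha> :: real assume "\<alpha> > 0"
  then have "\<alpha> / 2 > 0"
    by simp
  have "finite_measure \<mu>"
    using assms(3) unfolding prob_space_def by blast
  then have "closed_open_regular \<mu> Q"
    using assms(4,10) by (rule closed_open_regular_borel)
  then obtain K G where "closed K" "open G" "K \<subseteq> Q" "Q \<subseteq> G" and gap: "measure \<mu> (G - K) < \<alpha> / 2"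
    using \<open>\<alpha> / 2 > 0\<close> unfolding closed_open_regular_def by meson
  have "compact K" "compact (- G)"
    using \<open>closed K\<close> \<open>open G\<close> compact_Int_closed[OF assms(1)] by auto
  moreover have "- G \<inter> Q = {}"
    using \<open>Q \<subseteq> G\<close> by blast
  ultimately obtain T where tracked: "\<And>T'. T' \<ge> T \<Longrightarrow> measure \<mu> (tracked_points f \<epsilon> T' (- G) K) < \<alpha> / 2"
    using tracked_points_measure_small[OF \<open>finite_measure \<mu>\<close> assms(4,6) continuous_flow_continuous_on[OF assms(2)]
        _ _ \<open>K \<subseteq> Q\<close> _ assms(11) \<open>\<alpha> / 2 > 0\<close>] by blast
  show "\<exists>t0. \<forall>t\<ge>t0. \<exists>U\<subseteq>A t. measure \<mu> ((\<Union>U - Q) \<union> (Q - \<Union>U)) < \<alpha>"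
  proof (intro exI[of _ "max 1 (2 * T)"] allI impI)
    fix t assume "max 1 (2 * T) \<le> t"
    then have partition: "adapted_partition f t \<gamma> (E t) (A t)"
      using assms(9) by simp
    have "2 * \<gamma> \<le> \<epsilon>"
      using assms(8) by simp
    obtain U where "U \<subseteq> A t"
      and "measure \<mu> ((\<Union>U - Q) \<union> (Q - \<Union>U))
             \<le> measure \<mu> (G - K) + measure \<mu> (tracked_points f \<epsilon> (t / 2) (- G) K)"
      using adapted_partition_symdiff_measure_le[OF assms(1,2) \<open>finite_measure \<mu>\<close> assms(4,5) partition
          \<open>2 * \<gamma> \<le> \<epsilon>\<close> \<open>closed K\<close> \<open>open G\<close> \<open>K \<subseteq> Q\<close> \<open>Q \<subseteq> G\<close> assms(11)] by meson
    moreover have "measure \<mu> (tracked_points f \<epsilon> (t / 2) (- G) K) < \<alpha> / 2"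
      using \<open>max 1 (2 * T) \<le> t\<close> by (intro tracked) simp
    ultimately show "\<exists>U\<subseteq>A t. measure \<mu> ((\<Union>U - Q) \<union> (Q - \<Union>U)) < \<alpha>"
      using gap by (intro exI[of _ U]) simp
  qed
qed

end
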